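(* Let $a$ and $b$ be relatively prime integers with $1<a<b$, let $(u,v)$ be the definitely least solution of $ax+by=1$, and let $S=\langle a,b\rangle$. Then every nonempty set $I_{i,a}(S)$, $i\in\{1,\dots,a-1\}$, has exactly $|u|$ elements.
   Context: $\langle a,b\rangle=\{\lambda_1a+\lambda_2b:\lambda_1,\lambda_2\in\mathbb{N}\}$. $I(S)$ is the set of isolated gaps of $S$ ($x\in\mathbb{N}\setminus S$ with $x-1,x+1\in S$), and $I_{i,a}(S)=\{s\in I(S):s\equiv i\pmod a\}$. The definitely least solution $(u,v)$ of $ax+by=1$ is the unique integer solution with $|u|,|v|$ minimal; equivalently the one with $|u|\le b/2$, $|v|\le a/2$. *)

theory Defs
  imports Main
begin

definition semigroup2 :: "nat \<Rightarrow> nat \<Rightarrow> nat set" where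
  "semigroup2 a b = {l1 * a + l2 * b | l1 l2. True}"

definition isolated_gaps :: "nat set \<Rightarrow> nat set" where
  "isolated_gaps S = {x. x \<notin> S \<and> 1 \<le> x \<and> x - 1 \<in> S \<and> x + 1 \<in> S}"

definition isolated_gaps_mod :: "nat \<Rightarrow> nat \<Rightarrow> nat set \<Rightarrow> nat set" where
  "isolated_gaps_mod i a S = {s \<in> isolated_gaps S. s mod a = i mod a}"

text \<open>Definitely least solution of a x + b y = 1, characterised (as in the paper)
  by |u| \<le> b/2 and |v| \<le> a/2.\<close>
definition definitely_least_solution :: "int \<Rightarrow> int \<Rightarrow> int \<Rightarrow> int \<Rightarrow> bool" where
  "definitely_least_solution a b u v \<longleftrightarrow>
     a * u + b * v = 1 \<and> 2 * \<bar>u\<bar> \<le> b \<and> 2 * \<bar>v\<bar> \<le> a"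

end

theory Submission
  imports Defs "HOL-Number_Theory.Cong"
begin

text \<open>
  Let \<open>a u + b v = 1\<close>. The least element of \<open>S = \<langle>a,b\<rangle>\<close> congruent to \<open>x\<close> modulo \<open>a\<close> is
  \<open>w(x) = (x v mod a) b\<close>, and \<open>x \<in> S\<close> iff \<open>w(x) \<le> x\<close>. Because \<open>w(x) \<equiv> x (mod a)\<close> and
  \<open>b dvd w(x)\<close>, every step satisfies \<open>w(x) + 1 - w(x+1) = a s\<close> with \<open>s \<equiv> u (mod b)\<close> and
  \<open>-b < s \<le> b\<close>. Writing \<open>s\<^sup>+\<close>, \<open>s\<^sup>-\<close> for the steps \<open>i \<rightarrow> i+1\<close> and \<open>i-1 \<rightarrow> i\<close>, the isolated
  gaps congruent to \<open>i\<close> are the \<open>x \<equiv> i\<close> with \<open>w(i) - a min(s\<^sup>+, -s\<^sup>-) \<le> x < w(i)\<close>.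
  If there is one, \<open>s\<^sup>+\<close> and \<open>s\<^sup>-\<close> are the representatives of \<open>u\<close> in \<open>(0,b]\<close> and \<open>(-b,0)\<close>,
  and \<open>2|u| \<le> b\<close> makes the smaller of \<open>s\<^sup>+\<close>, \<open>-s\<^sup>-\<close> equal to \<open>|u|\<close>.
\<close>

lemma card_congruent_window:
  fixes A P :: int and n :: nat
  assumes "0 < A" and "0 \<le> P - A * int n"
  shows "card {x::nat. P - A * int n \<le> int x \<and> int x < P \<and> int x mod A = P mod A} = n"
proof -
  let ?f = "\<lambda>k::nat. nat (P - A * int k)"
  have "{x::nat. P - A * int n \<le> int x \<and> int x < P \<and> int x mod A = P mod A} = ?f ` {1..n}"
  proof (intro set_eqI iffI)
    fix x assume "x \<in> {x::nat. P - A * int n \<le> int x \<and> int x < P \<and> int x mod A = P mod A}"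
    then have x: "P - A * int n \<le> int x" "int x < P" "A dvd P - int x"
      by (auto simp: mod_eq_dvd_iff dvd_diff_commute)
    then obtain k where k: "P - int x = A * k" by blast
    with x have "0 < A * k" "A * k \<le> A * int n" by linarith+
    with \<open>0 < A\<close> have "0 < k" "k \<le> int n"
      by (simp_all add: zero_less_mult_iff)
    with k show "x \<in> ?f ` {1..n}"
      by (intro image_eqI[of _ _ "nat k"]) auto
  next
    fix x assume "x \<in> ?f ` {1..n}"
    then obtain k where k: "1 \<le> k" "k \<le> n" and x: "x = ?f k" by auto
    have k_bounds: "A * int k \<le> A * int n" "0 < A * int k"
      using k \<open>0 < A\<close> by auto
    then have "int x = P - A * int k"
      using x assms(2) by simp
    moreover have "(P - A * int k) mod A = P mod A"
      by (simp add: mod_eq_dvd_iff)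
    ultimately show "x \<in> {x::nat. P - A * int n \<le> int x \<and> int x < P \<and> int x mod A = P mod A}"
      using k_bounds by simp
  qed
  moreover have "inj_on ?f {1..n}"
  proof
    fix k l assume "k \<in> {1..n}" "l \<in> {1..n}" "?f k = ?f l"
    moreover have "A * int k \<le> A * int n" "A * int l \<le> A * int n"
      using \<open>k \<in> {1..n}\<close> \<open>l \<in> {1..n}\<close> \<open>0 < A\<close> by auto
    ultimately have "A * int k = A * int l"
      using assms(2) by (simp add: nat_eq_iff)
    then show "k = l" using \<open>0 < A\<close> by simp
  qed
  ultimately show ?thesis by (simp add: card_image)
qed

lemma min_pos_neg_representative_eq_abs:
  fixes s t u b :: int
  assumes "[s = u] (mod b)" and "[t = u] (mod b)"
    and "0 < s" "s \<le> b" "- b < t" "t < 0" "2 * \<bar>u\<bar> \<le> b"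
  shows "min s (- t) = \<bar>u\<bar>"
proof -
  obtain k l where k: "s = u + k * b" and l: "t = u + l * b"
    using assms(1,2) by (metis cong_iff_lin cong_sym mult.commute)
  have "0 < b" using assms by linarith
  have "(- 1) * b < k * b" "k * b < 2 * b" "(- 2) * b < l * b" "l * b < 1 * b"
    using assms k l abs_ge_self[of u] abs_ge_minus_self[of u] by linarith+
  then have "- 1 < k" "k < 2" "- 2 < l" "l < 1"
    using \<open>0 < b\<close> mult_less_cancel_right_pos by blast+
  then have "k = 0 \<or> k = 1" "l = - 1 \<or> l = 0" by linarith+
  then show ?thesis using assms k l by (auto simp: abs_if)
qed

locale bezout_pair =
  fixes a b :: nat and u v :: int
  assumes bezout: "int a * u + int b * v = 1"
    and a_pos: "0 < a" and b_pos: "0 < b"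
begin

definition apery :: "nat \<Rightarrow> int" where
  "apery x = (int x * v mod int a) * int b"

lemma bezout_b: "int b * v = 1 - int a * u"
  using bezout by simp

lemma apery_nonneg: "0 \<le> apery x"
  using a_pos by (simp add: apery_def)

lemma apery_le: "apery x \<le> (int a - 1) * int b"
proof -
  have "int x * v mod int a \<le> int a - 1"
    using pos_mod_bound[of "int a" "int x * v"] a_pos by linarith
  then show ?thesis unfolding apery_def by (simp add: mult_right_mono)
qed

lemma b_dvd_apery: "int b dvd apery x"
  by (simp add: apery_def)

lemma apery_mod: "apery x mod int a = int x mod int a"
proof -
  have "apery x mod int a = int x * v * int b mod int a"
    by (simp add: apery_def mod_mult_left_eq)
  also have "int x * v * int b = int x * (int b * v)"
    by (simp add: ac_simps)
  also have "\<dots> = int x + int a * (- int x * u)"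
    unfolding bezout_b by (simp add: algebra_simps)
  also have "(int x + int a * (- int x * u)) mod int a = int x mod int a"
    by (rule mod_mult_self2)
  finally show ?thesis .
qed

lemma apery_eq_if_mod_eq: "int x mod int a = int y mod int a \<Longrightarrow> apery x = apery y"
  unfolding apery_def by (metis mod_mult_left_eq)

lemma mem_semigroup2_iff: "x \<in> semigroup2 a b \<longleftrightarrow> apery x \<le> int x"
proof
  assume "x \<in> semigroup2 a b"
  then obtain l1 l2 where x: "x = l1 * a + l2 * b" by (auto simp: semigroup2_def)
  have "int x * v = int l1 * int a * v + int l2 * (int b * v)"
    by (simp add: x algebra_simps)
  also have "\<dots> = int l2 + int a * (int l1 * v - int l2 * u)"
    unfolding bezout_b by (simp add: algebra_simps)
  finally have "int x * v = int l2 + int a * (int l1 * v - int l2 * u)" .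
  then have "int x * v mod int a \<le> int l2"
    by (simp add: zmod_le_nonneg_dividend)
  then have "apery x \<le> int l2 * int b"
    unfolding apery_def by (simp add: mult_right_mono)
  also have "\<dots> \<le> int x" by (simp add: x)
  finally show "apery x \<le> int x" .
next
  assume le: "apery x \<le> int x"
  obtain q where q: "int x - apery x = int a * q"
    using apery_mod by (metis mod_eq_dvd_iff dvd_def)
  define m where "m = int x * v mod int a"
  have m: "apery x = m * int b" "0 \<le> m"
    using a_pos by (simp_all add: apery_def m_def)
  have "0 \<le> int a * q" using q le by simp
  then have "0 \<le> q" using a_pos by (simp add: zero_le_mult_iff)
  with q m have "int x = int (nat q * a + nat m * b)" by (simp add: algebra_simps)
  then show "x \<in> semigroup2 a b" unfolding semigroup2_def by (auto simp only: of_nat_eq_iff)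
qed

lemma apery_step:
  obtains s where "apery x + 1 - apery (Suc x) = int a * s"
    and "[s = u] (mod int b)" and "- int b < s" and "s \<le> int b"
proof -
  have "(apery x + 1) mod int a = (int x + 1) mod int a"
    by (metis apery_mod mod_add_left_eq)
  also have "\<dots> = apery (Suc x) mod int a"
    by (simp add: apery_mod add.commute)
  finally obtain s where s: "apery x + 1 - apery (Suc x) = int a * s"
    by (metis mod_eq_dvd_iff dvd_def)
  have "int a * s - 1 = apery x - apery (Suc x)"
    using s by simp
  then have "int b dvd int a * s - 1"
    by (simp add: b_dvd_apery)
  moreover have "s - u = u * (int a * s - 1) + int b * (s * v)"
  proof -
    have "s - u = s * (int a * u + int b * v) - u" using bezout by simp
    also have "\<dots> = u * (int a * s - 1) + int b * (s * v)" by (simp add: algebra_simps)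
    finally show ?thesis .
  qed
  ultimately have "[s = u] (mod int b)"
    by (simp add: cong_iff_dvd_diff)
  have "int a * s \<le> int a * int b"
    using s apery_nonneg[of "Suc x"] apery_le[of x] b_pos by (simp add: algebra_simps)
  moreover have "int a * (- int b) < int a * s"
    using s apery_nonneg[of x] apery_le[of "Suc x"] by (simp add: algebra_simps)
  ultimately show ?thesis
    using that s \<open>[s = u] (mod int b)\<close> a_pos
    by (metis mult_le_cancel_left_pos mult_less_cancel_left_pos of_nat_0_less_iff)
qed

lemma isolated_gap_iff:
  assumes "1 \<le> x"
    and s: "apery x + 1 - apery (Suc x) = int a * s"
    and t: "apery (x - 1) + 1 - apery x = int a * t"
  shows "x \<in> isolated_gaps (semigroup2 a b) \<longleftrightarrow>
    apery x - int a * s \<le> int x \<and> apery x + int a * t \<le> int x \<and> int x < apery x"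
  using assms by (auto simp: isolated_gaps_def mem_semigroup2_iff of_nat_diff)

lemma card_isolated_gaps_mod:
  assumes "0 < i" "i < a"
    and s: "apery i + 1 - apery (Suc i) = int a * s"
    and t: "apery (i - 1) + 1 - apery i = int a * t"
    and nonempty: "isolated_gaps_mod i a (semigroup2 a b) \<noteq> {}"
  shows "0 < s" "t < 0" "int (card (isolated_gaps_mod i a (semigroup2 a b))) = min s (- t)"
proof -
  define P where "P = apery i"
  have gaps: "isolated_gaps_mod i a (semigroup2 a b) =
      {y. P - int a * s \<le> int y \<and> P + int a * t \<le> int y \<and> int y < P \<and>
          int y mod int a = P mod int a}" (is "?G = ?W")
  proof (intro set_eqI)
    fix y
    show "y \<in> ?G \<longleftrightarrow> y \<in> ?W"
    proof (cases "int y mod int a = int i mod int a")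
      case True
      then have "1 \<le> y" using assms(1,2) by (cases "y = 0") auto
      have "(int y + 1) mod int a = (int i + 1) mod int a"
        using True by (metis mod_add_left_eq)
      moreover have "(int y - 1) mod int a = (int i - 1) mod int a"
        using True by (metis mod_diff_left_eq)
      ultimately have
        "apery y = apery i" "apery (Suc y) = apery (Suc i)" "apery (y - 1) = apery (i - 1)"
        using True \<open>1 \<le> y\<close> \<open>0 < i\<close>
        by (auto intro!: apery_eq_if_mod_eq simp: of_nat_diff add.commute)
      then show ?thesis using isolated_gap_iff[OF \<open>1 \<le> y\<close>] s t True
        by (simp add: isolated_gaps_mod_def P_def apery_mod flip: of_nat_mod)
    next
      case False
      then show ?thesis by (simp add: isolated_gaps_mod_def P_def apery_mod flip: of_nat_mod)
    qed
  qed
  from nonempty obtain y where "P - int a * s \<le> int y" "P + int a * t \<le> int y" "int y < P"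
    unfolding gaps by blast
  then have "0 < int a * s" "int a * t < 0" by linarith+
  then show "0 < s" "t < 0" using a_pos by (simp_all add: zero_less_mult_iff mult_less_0_iff)
  have window: "P - int a * min s (- t) = max (P - int a * s) (P + int a * t)"
    using a_pos mult_le_cancel_left_pos[of "int a" s "- t"] by (auto simp: min_def max_def)
  have "0 < P + int a * t"
    using t apery_nonneg[of "i - 1"] by (simp add: P_def)
  then have "0 \<le> P - int a * int (nat (min s (- t)))"
    using window \<open>0 < s\<close> \<open>t < 0\<close> by simp
  then have "card {y. P - int a * int (nat (min s (- t))) \<le> int y \<and> int y < P \<and>
      int y mod int a = P mod int a} = nat (min s (- t))"
    using a_pos by (intro card_congruent_window) simp_all
  then show "int (card (isolated_gaps_mod i a (semigroup2 a b))) = min s (- t)"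
    unfolding gaps using window \<open>0 < s\<close> \<open>t < 0\<close> by simp
qed

end

theorem proposition3p11:
  fixes a b :: nat and u v :: int
  assumes "coprime a b" and "1 < a" and "a < b"
    and "definitely_least_solution (int a) (int b) u v"
  shows "\<forall>i \<in> {1..a-1}. isolated_gaps_mod i a (semigroup2 a b) \<noteq> {} \<longrightarrow>
           int (card (isolated_gaps_mod i a (semigroup2 a b))) = \<bar>u\<bar>"
proof (intro ballI impI)
  fix i assume "i \<in> {1..a-1}" and nonempty: "isolated_gaps_mod i a (semigroup2 a b) \<noteq> {}"
  then have "0 < i" "i < a" using assms(2) by auto
  have bezout: "int a * u + int b * v = 1" and u_small: "2 * \<bar>u\<bar> \<le> int b"
    using assms(4) by (simp_all add: definitely_least_solution_def)
  interpret bezout_pair a b u v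
    using bezout assms(2,3) by unfold_locales simp_all
  obtain s where s: "apery i + 1 - apery (Suc i) = int a * s" "[s = u] (mod int b)" "s \<le> int b"
    using apery_step by metis
  obtain t where t: "apery (i - 1) + 1 - apery i = int a * t" "[t = u] (mod int b)" "- int b < t"
    using apery_step[of "i - 1"] \<open>0 < i\<close> by (metis Suc_diff_1)
  note gaps = card_isolated_gaps_mod[OF \<open>0 < i\<close> \<open>i < a\<close> s(1) t(1) nonempty]
  have "min s (- t) = \<bar>u\<bar>"
    using min_pos_neg_representative_eq_abs[OF s(2) t(2)] s(3) t(3) gaps(1,2) u_small by blast
  with gaps(3) show "int (card (isolated_gaps_mod i a (semigroup2 a b))) = \<bar>u\<bar>" by simp
qed

end
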